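(* For the action of $D_6$ on $\mathbb{C}\langle u,v\rangle$ described in the context, the Hilbert series of the invariant algebra is \[ H\big(\mathbb{C}\langle u,v\rangle^{D_6},t\big)=\frac{1-t-t^2}{1-t-2t^2}=1+t^2+t^3+3t^4+5t^5+11t^6+21t^7+\cdots, \] and if $Y$ is any set of homogeneous elements freely generating $\mathbb{C}\langle u,v\rangle^{D_6}$ as an algebra (such a set exists since this algebra is free), then $Y$ contains no elements of degree $1$, and for every $d\ge 2$ the number of elements of $Y$ of degree $d$ equals the Fibonacci number $F_{d-1}$ (where $F_1=F_2=1$, $F_{j+2}=F_{j+1}+F_j$); equivalently, the generating function of the degrees of the free generators is $\frac{t^2}{1-t-t^2}$.
   Context: $\mathbb{C}\langle u,v\rangle$ is the free associative unital algebra over $\mathbb C$ on two noncommuting variables $u,v$, graded by total degree. The dihedral group $D_{2n}$ (here $n=3$) acts on $\mathbb{C}\langle u,v\rangle$ by algebra automorphisms determined by $\rho(u)=\xi u$, $\rho(v)=\xi^{-1}v$, $\tau(u)=v$, $\tau(v)=u$, where $\xi=e^{2\pi i/n}$ and $\rho,\tau$ are the generators of $D_{2n}=\langle\rho,\tau\mid \rho^n=\tau^2=(\tau\rho)^2=1\rangle$. The Hilbert series of a graded subalgebra $F$ is $\sum_{k\ge0}\dim F^{(k)}t^k$, $F^{(k)}$ being its homogeneous component of degree $k$. *)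

theory Defs
  imports Complex_Main "HOL-Number_Theory.Fib" "HOL-Library.Function_Algebras"
    "HOL-Computational_Algebra.Formal_Power_Series"
begin

text \<open>Elements of the free algebra C<u,v> are finitely supported coefficient functions
  on words; a word is a bool list with False = u and True = v.\<close>

type_synonym ncpoly = "bool list \<Rightarrow> complex"

definition nc_elems :: "ncpoly set" where
  "nc_elems = {p. finite {w. p w \<noteq> 0}}"

definition nc_scale :: "complex \<Rightarrow> ncpoly \<Rightarrow> ncpoly" where
  "nc_scale c p = (\<lambda>w. c * p w)"

definition nc_one :: ncpoly where
  "nc_one = (\<lambda>w. if w = [] then 1 else 0)"

definition nc_mult :: "ncpoly \<Rightarrow> ncpoly \<Rightarrow> ncpoly" where
  "nc_mult p q = (\<lambda>w. \<Sum>i\<le>length w. p (take i w) * q (drop i w))"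

definition nc_prod :: "ncpoly list \<Rightarrow> ncpoly" where
  "nc_prod ys = foldr nc_mult ys nc_one"

text \<open>Homogeneous of degree d (the zero polynomial is homogeneous of every degree).\<close>
definition nc_homog :: "nat \<Rightarrow> ncpoly \<Rightarrow> bool" where
  "nc_homog d p \<longleftrightarrow> p \<in> nc_elems \<and> (\<forall>w. p w \<noteq> 0 \<longrightarrow> length w = d)"

text \<open>The generators of D_{2n}: rho(u) = xi u, rho(v) = xi^{-1} v, tau swaps u and v,
  extended to algebra automorphisms; on coefficient functions.\<close>
definition dih_xi :: "nat \<Rightarrow> complex" where
  "dih_xi n = cis (2 * pi / real n)"

definition dih_rho :: "nat \<Rightarrow> ncpoly \<Rightarrow> ncpoly" where
  "dih_rho n p = (\<lambda>w. dih_xi n powi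
      (int (length (filter Not w)) - int (length (filter id w))) * p w)"

definition dih_tau :: "ncpoly \<Rightarrow> ncpoly" where
  "dih_tau p = (\<lambda>w. p (map Not w))"

text \<open>Invariant algebra C<u,v>^{D_{2n}}: elements fixed by the generators rho, tau
  (hence by the whole group they generate).\<close>
definition dih_invariants :: "nat \<Rightarrow> ncpoly set" where
  "dih_invariants n = {p \<in> nc_elems. dih_rho n p = p \<and> dih_tau p = p}"

definition inv_hdim :: "nat \<Rightarrow> nat \<Rightarrow> nat" where
  "inv_hdim n k = vector_space.dim nc_scale {p \<in> dih_invariants n. nc_homog k p}"

definition inv_hilbert_series :: "nat \<Rightarrow> complex fps" where
  "inv_hilbert_series n = Abs_fps (\<lambda>k. of_nat (inv_hdim n k))"

text \<open>Y is a set of homogeneous elements freely generating the subalgebra F: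
  the canonical algebra map from the free algebra on Y (whose basis consists of the
  words over Y) to C<u,v> is injective with image F, i.e. the products of finite
  sequences of elements of Y are pairwise distinct for distinct sequences,
  linearly independent, and span F.\<close>
definition free_homog_generators :: "ncpoly set \<Rightarrow> ncpoly set \<Rightarrow> bool" where
  "free_homog_generators Y F \<longleftrightarrow>
     Y \<subseteq> F \<and> (\<forall>y\<in>Y. \<exists>d. nc_homog d y) \<and>
     inj_on nc_prod (lists Y) \<and>
     \<not> module.dependent nc_scale (nc_prod ` lists Y) \<and>
     module.span nc_scale (nc_prod ` lists Y) = F"

end

theory Submission
  imports Defs "HOL-Library.Real_Mod"
begin

text \<open>A word spans an eigenline of rho, with eigenvalue xi to the power of its weight
  (number of u's minus number of v's), and tau maps it to its flip, where u and v are exchanged.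
  So the invariants of D_2n are spanned by the orbit sums of the words of weight divisible by n,
  one for each such word that is empty or starts with v (a normalized word). The normalized words
  form a free monoid under concatenation, and the orbit sums of its irreducible elements freely
  generate the invariant algebra: the product of the orbit sums of g_1, ..., g_m has leading word
  g_1 ... g_m for the order by length and then lexicographically with v above u, and these leading
  words are pairwise distinct by unique factorization. Hence the degree-k component has the
  dimension of the normalized words of length k; for n = 3 this is 1 for k = 0 and otherwise the
  number c_(k-1) of words of length k - 1 and weight 1 mod 3, where c_(m+2) = c_(m+1) + 2 c_m.
  For an arbitrary free homogeneous generating set Y with degree series G, counting the monomials
  in Y gives H = 1 + G H for the Hilbert series H = N / D, so G = (N - D) / N = t^2 / (1 - t - t^2),
  the generating function of the Fibonacci numbers.\<close>

unbundle fps_syntax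

section \<open>The free algebra as a graded vector space\<close>

interpretation nc: vector_space nc_scale
  by unfold_locales (auto simp: nc_scale_def fun_eq_iff algebra_simps)

lemma sum_fun_apply: "(\<Sum>a\<in>A. (f a :: 'x \<Rightarrow> 'y::comm_monoid_add)) x = (\<Sum>a\<in>A. f a x)"
  by (induction A rule: infinite_finite_induct) auto

lemma nc_mult_apply_homog_left:
  assumes "\<forall>w. p w \<noteq> 0 \<longrightarrow> length w = n"
  shows "nc_mult p q w = (if n \<le> length w then p (take n w) * q (drop n w) else 0)"
proof -
  have "nc_mult p q w = (\<Sum>i\<le>length w. if i = n then p (take i w) * q (drop i w) else 0)"
    unfolding nc_mult_def
  proof (rule sum.cong)
    fix i assume "i \<in> {..length w}"
    then have "length (take i w) = i" by simp
    then show "p (take i w) * q (drop i w) = (if i = n then p (take i w) * q (drop i w) else 0)"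
      using assms by auto
  qed simp
  also have "\<dots> = (if n \<le> length w then p (take n w) * q (drop n w) else 0)"
    by auto
  finally show ?thesis .
qed

lemma nc_homog_mult:
  assumes "nc_homog a p" "nc_homog b q"
  shows "nc_homog (a + b) (nc_mult p q)"
proof -
  have pa: "\<forall>w. p w \<noteq> 0 \<longrightarrow> length w = a" and pf: "finite {w. p w \<noteq> 0}"
    using assms(1) by (auto simp: nc_homog_def nc_elems_def)
  have qb: "\<forall>w. q w \<noteq> 0 \<longrightarrow> length w = b" and qf: "finite {w. q w \<noteq> 0}"
    using assms(2) by (auto simp: nc_homog_def nc_elems_def)
  note pq = nc_mult_apply_homog_left[OF pa]
  have "{w. nc_mult p q w \<noteq> 0} \<subseteq> (\<lambda>(x, y). x @ y) ` ({w. p w \<noteq> 0} \<times> {w. q w \<noteq> 0})"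
  proof
    fix w assume "w \<in> {w. nc_mult p q w \<noteq> 0}"
    then have "p (take a w) \<noteq> 0" "q (drop a w) \<noteq> 0"
      by (auto simp: pq split: if_splits)
    then show "w \<in> (\<lambda>(x, y). x @ y) ` ({w. p w \<noteq> 0} \<times> {w. q w \<noteq> 0})"
      by (intro image_eqI[of _ _ "(take a w, drop a w)"]) auto
  qed
  then have "finite {w. nc_mult p q w \<noteq> 0}"
    by (rule finite_subset) (use pf qf in auto)
  moreover have "length w = a + b" if "nc_mult p q w \<noteq> 0" for w
  proof -
    have "a \<le> length w" "q (drop a w) \<noteq> 0"
      using that by (auto simp: pq split: if_splits)
    then show ?thesis using qb by fastforce
  qed
  ultimately show ?thesis by (auto simp: nc_homog_def nc_elems_def)
qed

lemma nc_homog_one: "nc_homog 0 nc_one"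
  by (auto simp: nc_homog_def nc_elems_def nc_one_def)

lemma nc_mult_one_right [simp]: "nc_mult p nc_one = p"
proof
  fix w
  have "nc_mult p nc_one w = (\<Sum>i\<le>length w. if i = length w then p (take i w) else 0)"
    unfolding nc_mult_def by (rule sum.cong) (auto simp: nc_one_def)
  then show "nc_mult p nc_one w = p w" by simp
qed

lemma nc_prod_Nil [simp]: "nc_prod [] = nc_one"
  and nc_prod_Cons [simp]: "nc_prod (y # ys) = nc_mult y (nc_prod ys)"
  by (simp_all add: nc_prod_def)

lemma nc_homog_nc_prod:
  assumes "\<And>y. y \<in> set ys \<Longrightarrow> nc_homog (deg y) y"
  shows "nc_homog (\<Sum>y\<leftarrow>ys. deg y) (nc_prod ys)"
  using assms by (induction ys) (auto simp: nc_homog_one intro: nc_homog_mult)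

lemma nc_homog_degree_unique: "nc_homog a p \<Longrightarrow> nc_homog b p \<Longrightarrow> p \<noteq> 0 \<Longrightarrow> a = b"
  by (auto simp: nc_homog_def fun_eq_iff)

definition nc_word :: "bool list \<Rightarrow> ncpoly" where
  "nc_word w = (\<lambda>v. if v = w then 1 else 0)"

lemma finite_words_length_eq: "finite {w :: bool list. length w = k}"
  using finite_lists_length_eq[of "UNIV :: bool set" k] by simp

lemma nc_homog_in_span_words:
  assumes "nc_homog k p"
  shows "p \<in> nc.span (nc_word ` {w. length w = k})"
proof -
  have "p = (\<Sum>w | length w = k. nc_scale (p w) (nc_word w))"
  proof
    fix v
    have "(\<Sum>w | length w = k. nc_scale (p w) (nc_word w)) v = (\<Sum>w | length w = k. if w = v then p v else 0)"
      unfolding sum_fun_apply by (rule sum.cong) (auto simp: nc_word_def nc_scale_def)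
    also have "\<dots> = p v"
      using assms finite_words_length_eq by (auto simp: nc_homog_def)
    finally show "p v = (\<Sum>w | length w = k. nc_scale (p w) (nc_word w)) v" by simp
  qed
  also have "\<dots> \<in> nc.span (nc_word ` {w. length w = k})"
    by (intro nc.span_sum nc.span_scale nc.span_base) auto
  finally show ?thesis .
qed

lemma independent_homog_finite:
  assumes "\<not> nc.dependent B" "\<And>b. b \<in> B \<Longrightarrow> nc_homog k b"
  shows "finite B"
proof -
  have "B \<subseteq> nc.span (nc_word ` {w. length w = k})"
    using assms(2) nc_homog_in_span_words by blast
  then show ?thesis
    using nc.independent_span_bound[OF finite_imageI[OF finite_words_length_eq] assms(1)] by blast
qed

definition homog_part :: "nat \<Rightarrow> ncpoly \<Rightarrow> ncpoly" where
  "homog_part k p = (\<lambda>w. if length w = k then p w else 0)"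

lemma homog_part_in_span:
  assumes "p \<in> nc.span S" "\<And>v. v \<in> S \<Longrightarrow> \<exists>d. nc_homog d v"
  shows "homog_part k p \<in> nc.span {v \<in> S. nc_homog k v}"
  using assms(1)
proof (induction rule: nc.span_induct)
  case base
  have "homog_part k 0 = 0" "homog_part k (x + y) = homog_part k x + homog_part k y"
    "homog_part k (nc_scale c x) = nc_scale c (homog_part k x)" for x y c
    by (auto simp: homog_part_def fun_eq_iff nc_scale_def)
  then show ?case
    by (auto simp: nc.subspace_def nc.span_zero nc.span_add nc.span_scale)
next
  case (step v)
  then obtain d where d: "nc_homog d v" using assms(2) by blast
  show ?case
  proof (cases "d = k")
    case True
    then have "homog_part k v = v" using d by (auto simp: homog_part_def fun_eq_iff nc_homog_def)
    then show ?thesis using True d step by (auto intro: nc.span_base)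
  next
    case False
    then have "homog_part k v = 0" using d by (auto simp: homog_part_def fun_eq_iff nc_homog_def)
    then show ?thesis by (metis nc.span_zero)
  qed
qed

section \<open>Free homogeneous generators and Hilbert series\<close>

definition homog_degree :: "ncpoly \<Rightarrow> nat" where
  "homog_degree y = (SOME d. nc_homog d y)"

lemma nc_homog_homog_degree: "\<exists>d. nc_homog d y \<Longrightarrow> nc_homog (homog_degree y) y"
  unfolding homog_degree_def by (rule someI_ex)

lemma homog_degree_eq: "nc_homog d y \<Longrightarrow> y \<noteq> 0 \<Longrightarrow> homog_degree y = d"
  using nc_homog_homog_degree nc_homog_degree_unique by blast

definition weighted_lists :: "('a \<Rightarrow> nat) \<Rightarrow> 'a set \<Rightarrow> nat \<Rightarrow> 'a list set" where
  "weighted_lists \<delta> A k = {xs \<in> lists A. (\<Sum>x\<leftarrow>xs. \<delta> x) = k}"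

definition graded_dim :: "ncpoly set \<Rightarrow> nat \<Rightarrow> nat" where
  "graded_dim F k = nc.dim {p \<in> F. nc_homog k p}"

lemma nc_homog_nc_prod_free:
  assumes "free_homog_generators Y F" "ys \<in> lists Y"
  shows "nc_homog (\<Sum>y\<leftarrow>ys. homog_degree y) (nc_prod ys)"
  using assms by (intro nc_homog_nc_prod) (auto simp: free_homog_generators_def intro: nc_homog_homog_degree)

lemma free_homog_products_of_degree:
  assumes free: "free_homog_generators Y F"
  shows "{v \<in> nc_prod ` lists Y. nc_homog k v} = nc_prod ` weighted_lists homog_degree Y k"
proof (intro equalityI subsetI)
  fix v assume "v \<in> {v \<in> nc_prod ` lists Y. nc_homog k v}"
  then obtain ys where ys: "ys \<in> lists Y" "v = nc_prod ys" "nc_homog k v" by blast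
  have "v \<in> nc_prod ` lists Y" using ys by blast
  then have "v \<noteq> 0"
    using free nc.dependent_zero unfolding free_homog_generators_def by metis
  then have "(\<Sum>y\<leftarrow>ys. homog_degree y) = k"
    by (metis nc_homog_degree_unique nc_homog_nc_prod_free[OF free] ys)
  then show "v \<in> nc_prod ` weighted_lists homog_degree Y k"
    using ys by (auto simp: weighted_lists_def)
next
  fix v assume "v \<in> nc_prod ` weighted_lists homog_degree Y k"
  then obtain ys where "ys \<in> lists Y" "(\<Sum>y\<leftarrow>ys. homog_degree y) = k" "v = nc_prod ys"
    by (auto simp: weighted_lists_def)
  then show "v \<in> {v \<in> nc_prod ` lists Y. nc_homog k v}"
    using nc_homog_nc_prod_free[OF free] by blast
qed

lemma free_homog_generators_graded_dim:
  assumes free: "free_homog_generators Y F"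
  shows "finite (weighted_lists homog_degree Y k)
    \<and> graded_dim F k = card (weighted_lists homog_degree Y k)"
proof -
  let ?L = "weighted_lists homog_degree Y k"
  have inj: "inj_on nc_prod (lists Y)" and indep: "\<not> nc.dependent (nc_prod ` lists Y)"
    and span: "nc.span (nc_prod ` lists Y) = F"
    using free by (auto simp: free_homog_generators_def)
  note homog_k = free_homog_products_of_degree[OF free, of k]
  have indep_L: "\<not> nc.dependent (nc_prod ` ?L)"
    by (rule nc.independent_mono[OF indep]) (auto simp: weighted_lists_def)
  have sub: "nc_prod ` ?L \<subseteq> {p \<in> F. nc_homog k p}"
    using homog_k span nc.span_superset[of "nc_prod ` lists Y"] by blast
  have "{p \<in> F. nc_homog k p} \<subseteq> nc.span (nc_prod ` ?L)"
  proof
    fix p assume p: "p \<in> {p \<in> F. nc_homog k p}"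
    then have "p = homog_part k p" by (auto simp: homog_part_def fun_eq_iff nc_homog_def)
    also have "\<dots> \<in> nc.span {v \<in> nc_prod ` lists Y. nc_homog k v}"
    proof (rule homog_part_in_span)
      show "p \<in> nc.span (nc_prod ` lists Y)" using p span by simp
      show "\<exists>d. nc_homog d v" if "v \<in> nc_prod ` lists Y" for v
        using that nc_homog_nc_prod_free[OF free] by blast
    qed
    finally show "p \<in> nc.span (nc_prod ` ?L)" by (simp only: homog_k)
  qed
  then have "graded_dim F k = card (nc_prod ` ?L)"
    unfolding graded_dim_def using sub indep_L by (intro nc.dim_unique) auto
  moreover have "finite (nc_prod ` ?L)"
    by (rule independent_homog_finite[OF indep_L]) (use homog_k in blast)
  moreover have "inj_on nc_prod ?L"
    by (rule inj_on_subset[OF inj]) (auto simp: weighted_lists_def)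
  ultimately show ?thesis by (simp add: card_image finite_image_iff)
qed

lemma free_generator_nonzero:
  assumes "free_homog_generators Y F" "y \<in> Y"
  shows "y \<noteq> 0"
proof -
  have "y \<in> nc_prod ` lists Y"
    using assms(2) by (intro image_eqI[of _ _ "[y]"]) auto
  then show ?thesis
    using assms(1) nc.dependent_zero unfolding free_homog_generators_def by metis
qed

text \<open>A generator of degree 0 would be a multiple of the empty product nc_one, another member
  of the independent family of products.\<close>

lemma free_generator_degree_pos:
  assumes free: "free_homog_generators Y F" and y: "y \<in> Y"
  shows "homog_degree y > 0"
proof (rule ccontr)
  assume "\<not> homog_degree y > 0"
  moreover have "nc_homog (homog_degree y) y"
    using free y by (intro nc_homog_homog_degree) (auto simp: free_homog_generators_def)
  ultimately have "\<forall>w. y w \<noteq> 0 \<longrightarrow> w = []" by (simp add: nc_homog_def)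
  then have y_eq: "y = nc_scale (y []) nc_one"
    by (auto simp: fun_eq_iff nc_scale_def nc_one_def)
  have inj: "inj_on nc_prod (lists Y)" and indep: "\<not> nc.dependent (nc_prod ` lists Y)"
    using free by (auto simp: free_homog_generators_def)
  have "y \<noteq> nc_one"
    using inj_onD[OF inj, of "[y]" "[]"] y by auto
  moreover have "nc_one \<in> nc_prod ` lists Y"
    by (rule image_eqI[of _ _ "[]"]) auto
  moreover have "y \<in> nc_prod ` lists Y"
    by (rule image_eqI[of _ _ "[y]"]) (use y in auto)
  ultimately have "y \<in> nc.span (nc_prod ` lists Y - {y})"
    using y_eq by (metis nc.span_base nc.span_scale insertE insert_Diff)
  then show False
    using indep \<open>y \<in> nc_prod ` lists Y\<close> unfolding nc.dependent_def by blast
qed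

lemma free_generators_of_degree:
  assumes "free_homog_generators Y F"
  shows "{y \<in> Y. nc_homog d y} = {y \<in> Y. homog_degree y = d}"
proof -
  have "nc_homog (homog_degree y) y" if "y \<in> Y" for y
    using assms that by (intro nc_homog_homog_degree) (auto simp: free_homog_generators_def)
  then show ?thesis
    using assms homog_degree_eq free_generator_nonzero by blast
qed

lemma finite_free_generators_of_degree:
  assumes "free_homog_generators Y F"
  shows "finite {y \<in> Y. homog_degree y = d}"
proof -
  have "(\<lambda>y. [y]) ` {y \<in> Y. homog_degree y = d} \<subseteq> weighted_lists homog_degree Y d"
    by (auto simp: weighted_lists_def)
  then have "finite ((\<lambda>y. [y]) ` {y \<in> Y. homog_degree y = d})"
    using free_homog_generators_graded_dim[OF assms] finite_subset by blast
  then show ?thesis by (rule finite_imageD) (auto simp: inj_on_def)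
qed

lemma weighted_lists_0:
  assumes "\<And>a. a \<in> A \<Longrightarrow> \<delta> a > 0"
  shows "weighted_lists \<delta> A 0 = {[]}"
proof -
  have "xs = []" if "xs \<in> weighted_lists \<delta> A 0" for xs
    using that assms[of "hd xs"] by (cases xs) (auto simp: weighted_lists_def)
  then show ?thesis by (auto simp: weighted_lists_def)
qed

lemma weighted_lists_decompose:
  assumes "\<And>a. a \<in> A \<Longrightarrow> \<delta> a > 0" "k > 0"
  shows "weighted_lists \<delta> A k =
    (\<Union>d\<in>{1..k}. (\<lambda>(a, xs). a # xs) ` ({a \<in> A. \<delta> a = d} \<times> weighted_lists \<delta> A (k - d)))"
    (is "_ = ?U")
proof (intro equalityI subsetI)
  fix xs assume xs: "xs \<in> weighted_lists \<delta> A k"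
  then obtain a ys where "xs = a # ys" "a \<in> A" "ys \<in> lists A" "\<delta> a + (\<Sum>y\<leftarrow>ys. \<delta> y) = k"
    using assms(2) by (cases xs) (auto simp: weighted_lists_def)
  moreover have "\<delta> a > 0" using assms(1) \<open>a \<in> A\<close> by blast
  ultimately show "xs \<in> ?U"
    by (auto simp: weighted_lists_def intro!: bexI[of _ "\<delta> a"] image_eqI[of _ _ "(a, ys)"])
qed (auto simp: weighted_lists_def)

lemma card_weighted_lists:
  assumes pos: "\<And>a. a \<in> A \<Longrightarrow> \<delta> a > 0"
    and fin_A: "\<And>d. finite {a \<in> A. \<delta> a = d}"
    and fin_L: "\<And>j. finite (weighted_lists \<delta> A j)"
    and "k > 0"
  shows "card (weighted_lists \<delta> A k) =
    (\<Sum>d=1..k. card {a \<in> A. \<delta> a = d} * card (weighted_lists \<delta> A (k - d)))"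
proof -
  let ?piece = "\<lambda>d. (\<lambda>(a, xs). a # xs) ` ({a \<in> A. \<delta> a = d} \<times> weighted_lists \<delta> A (k - d))"
  have inj: "inj_on (\<lambda>(a, xs). a # xs) X" for X :: "('a \<times> 'a list) set"
    by (auto simp: inj_on_def)
  have "card (weighted_lists \<delta> A k) = card (\<Union>d\<in>{1..k}. ?piece d)"
    using weighted_lists_decompose[of A \<delta> k, OF pos \<open>k > 0\<close>] by simp
  also have "\<dots> = (\<Sum>d=1..k. card (?piece d))"
    by (rule card_UN_disjoint) (use fin_A fin_L in auto)
  also have "\<dots> = (\<Sum>d=1..k. card {a \<in> A. \<delta> a = d} * card (weighted_lists \<delta> A (k - d)))"
    by (simp add: card_image[OF inj] card_cartesian_product)
  finally show ?thesis .
qed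

definition hilbert_series :: "ncpoly set \<Rightarrow> complex fps" where
  "hilbert_series F = Abs_fps (\<lambda>k. of_nat (graded_dim F k))"

definition degree_series :: "ncpoly set \<Rightarrow> complex fps" where
  "degree_series Y = Abs_fps (\<lambda>d. of_nat (card {y \<in> Y. nc_homog d y}))"

lemma hilbert_series_free:
  assumes free: "free_homog_generators Y F"
  shows "hilbert_series F = 1 + degree_series Y * hilbert_series F"
proof (rule fps_ext)
  fix k
  let ?L = "weighted_lists homog_degree Y"
  have pos: "\<And>y. y \<in> Y \<Longrightarrow> homog_degree y > 0"
    using free_generator_degree_pos[OF free] by blast
  have H: "hilbert_series F $ j = of_nat (card (?L j))" for j
    using free_homog_generators_graded_dim[OF free] by (simp add: hilbert_series_def)
  have G: "degree_series Y $ d = of_nat (card {y \<in> Y. homog_degree y = d})" for d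
    by (simp add: degree_series_def free_generators_of_degree[OF free])
  have "{y \<in> Y. homog_degree y = 0} = {}"
    using pos by fastforce
  then have G0: "degree_series Y $ 0 = 0"
    unfolding G by (metis card.empty of_nat_0)
  show "hilbert_series F $ k = (1 + degree_series Y * hilbert_series F) $ k"
  proof (cases "k = 0")
    case True
    then show ?thesis using weighted_lists_0[of Y homog_degree, OF pos] by (simp add: H G0 fps_mult_nth)
  next
    case False
    have "(degree_series Y * hilbert_series F) $ k
        = (\<Sum>d=1..k. degree_series Y $ d * hilbert_series F $ (k - d))"
      by (simp add: fps_mult_nth sum.atLeast_Suc_atMost G0)
    also have "\<dots> = of_nat (card (?L k))"
      using card_weighted_lists[of Y homog_degree, OF pos finite_free_generators_of_degree[OF free]]
        free_homog_generators_graded_dim[OF free] False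
      by (simp add: G H)
    finally show ?thesis using False by (simp add: H)
  qed
qed

lemma degree_series_free:
  assumes "free_homog_generators Y F" "hilbert_series F * D = N"
  shows "degree_series Y * N = N - D"
proof -
  let ?G = "degree_series Y" and ?H = "hilbert_series F"
  have "?G * N = ?G * ?H * D" using assms(2) by (simp add: mult.assoc)
  also have "?G * ?H = ?H - 1"
    using hilbert_series_free[OF assms(1)] by (metis add_diff_cancel_left')
  also have "(?H - 1) * D = N - D" using assms(2) by (simp add: algebra_simps)
  finally show ?thesis .
qed

section \<open>The invariants of the dihedral group\<close>

definition weight :: "bool list \<Rightarrow> int" where
  "weight w = int (length (filter Not w)) - int (length (filter id w))"

lemma weight_simps [simp]:
  "weight [] = 0" "weight (False # w) = weight w + 1" "weight (True # w) = weight w - 1"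
  "weight (a @ b) = weight a + weight b"
  by (auto simp: weight_def)

lemma weight_map_Not [simp]: "weight (map Not w) = - weight w"
  by (induction w) (auto simp: weight_def)

lemma dih_xi_powi_eq_1_iff:
  assumes "n > 0"
  shows "dih_xi n powi j = 1 \<longleftrightarrow> int n dvd j"
proof -
  have "dih_xi n powi j = 1 \<longleftrightarrow> (\<exists>m. of_int j * (2 * pi / real n) = of_int m * (2 * pi))"
    unfolding dih_xi_def cis_power_int by (rule cis_eq_1_iff)
  also have "\<dots> \<longleftrightarrow> (\<exists>m. real_of_int j = real_of_int m * real n)"
    using assms by (simp add: field_simps)
  also have "\<dots> \<longleftrightarrow> (\<exists>m. j = m * int n)"
    by (metis of_int_eq_iff of_int_mult of_int_of_nat_eq)
  finally show ?thesis by (auto simp: dvd_def mult.commute)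
qed

lemma dih_rho_fixed_iff:
  assumes "n > 0"
  shows "dih_rho n p = p \<longleftrightarrow> (\<forall>w. p w \<noteq> 0 \<longrightarrow> int n dvd weight w)"
proof -
  have "dih_rho n p = p \<longleftrightarrow> (\<forall>w. dih_xi n powi weight w * p w = p w)"
    by (auto simp: dih_rho_def weight_def fun_eq_iff)
  also have "\<dots> \<longleftrightarrow> (\<forall>w. p w \<noteq> 0 \<longrightarrow> int n dvd weight w)"
    using dih_xi_powi_eq_1_iff[OF assms] by (metis mult_cancel_right2)
  finally show ?thesis .
qed

lemma dih_invariants_iff:
  assumes "n > 0"
  shows "p \<in> dih_invariants n \<longleftrightarrow>
    p \<in> nc_elems \<and> (\<forall>w. p w \<noteq> 0 \<longrightarrow> int n dvd weight w) \<and> (\<forall>w. p (map Not w) = p w)"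
  unfolding dih_invariants_def dih_rho_fixed_iff[OF assms] by (simp add: dih_tau_def fun_eq_iff)

lemma dih_invariants_subspace: "nc.subspace (dih_invariants n)"
  unfolding nc.subspace_def
proof (intro conjI ballI allI)
  show "0 \<in> dih_invariants n"
    by (simp add: dih_invariants_def nc_elems_def dih_rho_def dih_tau_def fun_eq_iff)
next
  fix p q assume "p \<in> dih_invariants n" "q \<in> dih_invariants n"
  moreover have "{w. (p + q) w \<noteq> 0} \<subseteq> {w. p w \<noteq> 0} \<union> {w. q w \<noteq> 0}" by auto
  moreover have "dih_rho n (p + q) = dih_rho n p + dih_rho n q" "dih_tau (p + q) = dih_tau p + dih_tau q"
    by (auto simp: dih_rho_def dih_tau_def fun_eq_iff algebra_simps)
  ultimately show "p + q \<in> dih_invariants n"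
    by (auto simp: dih_invariants_def nc_elems_def intro: finite_subset)
next
  fix c p assume "p \<in> dih_invariants n"
  moreover have "{w. nc_scale c p w \<noteq> 0} \<subseteq> {w. p w \<noteq> 0}" by (auto simp: nc_scale_def)
  moreover have "dih_rho n (nc_scale c p) = nc_scale c (dih_rho n p)"
    "dih_tau (nc_scale c p) = nc_scale c (dih_tau p)"
    by (auto simp: dih_rho_def dih_tau_def nc_scale_def fun_eq_iff)
  ultimately show "nc_scale c p \<in> dih_invariants n"
    by (auto simp: dih_invariants_def nc_elems_def intro: finite_subset)
qed

lemma indicator_in_dih_invariants:
  assumes "n > 0" "finite {w. P w}" "\<And>w. P w \<Longrightarrow> int n dvd weight w" "\<And>w. P (map Not w) = P w"
  shows "(\<lambda>w. if P w then 1 else 0) \<in> dih_invariants n"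
  using assms by (auto simp: dih_invariants_iff nc_elems_def)

section \<open>Normalized words and their unique factorization\<close>

text \<open>Normalized words represent the tau-orbits of the words of weight divisible by n.\<close>

definition norm_words :: "nat \<Rightarrow> bool list set" where
  "norm_words n = {w. int n dvd weight w \<and> (w = [] \<or> hd w)}"

definition irreducible_words :: "nat \<Rightarrow> bool list set" where
  "irreducible_words n = {g \<in> norm_words n. g \<noteq> [] \<and>
     \<not> (\<exists>a b. a \<noteq> [] \<and> b \<noteq> [] \<and> a \<in> norm_words n \<and> b \<in> norm_words n \<and> g = a @ b)}"

lemma norm_words_append:
  assumes "a \<in> norm_words n" "b \<in> norm_words n"
  shows "a @ b \<in> norm_words n"
proof -
  have "int n dvd weight (a @ b)" using assms by (simp add: norm_words_def)
  moreover have "a @ b = [] \<or> hd (a @ b)" using assms by (cases a) (auto simp: norm_words_def)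
  ultimately show ?thesis by (simp add: norm_words_def)
qed

lemma irreducible_wordsD:
  assumes "g \<in> irreducible_words n"
  shows "g \<in> norm_words n" "g \<noteq> []" "hd g" "int n dvd weight g"
  using assms by (auto simp: irreducible_words_def norm_words_def)

lemma irreducible_words_not_append:
  "g \<in> irreducible_words n \<Longrightarrow> a \<noteq> [] \<Longrightarrow> b \<noteq> [] \<Longrightarrow> a \<in> norm_words n \<Longrightarrow> b \<in> norm_words n
    \<Longrightarrow> g \<noteq> a @ b"
  unfolding irreducible_words_def by blast

lemma Nil_in_norm_words [simp]: "[] \<in> norm_words n"
  by (simp add: norm_words_def)

lemma concat_in_norm_words: "gs \<in> lists (irreducible_words n) \<Longrightarrow> concat gs \<in> norm_words n"
proof (induction gs)
  case (Cons g gs)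
  then show ?case using norm_words_append irreducible_wordsD(1) by simp
qed simp

lemma norm_words_factorization:
  "w \<in> norm_words n \<Longrightarrow> \<exists>gs \<in> lists (irreducible_words n). concat gs = w"
proof (induction "length w" arbitrary: w rule: less_induct)
  case less
  consider "w = []" | "w \<in> irreducible_words n" | "w \<noteq> []" "w \<notin> irreducible_words n"
    by blast
  then show ?case
  proof cases
    case 1
    then show ?thesis by (intro bexI[of _ "[]"]) auto
  next
    case 2
    then show ?thesis by (intro bexI[of _ "[w]"]) auto
  next
    case 3
    then obtain a b where ab: "a \<noteq> []" "b \<noteq> []" "a \<in> norm_words n" "b \<in> norm_words n" "w = a @ b"
      using less.prems unfolding irreducible_words_def by blast
    then obtain gs hs where "gs \<in> lists (irreducible_words n)" "concat gs = a"
      "hs \<in> lists (irreducible_words n)" "concat hs = b"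
      using less.hyps[of a] less.hyps[of b] by auto
    then show ?thesis using ab by (intro bexI[of _ "gs @ hs"]) auto
  qed
qed

text \<open>A nonempty remainder us would be a normalized word, contradicting irreducibility of g:
  its weight is divisible by n, and it starts like the first factor of hs.\<close>

lemma irreducible_prefix:
  assumes g: "g \<in> irreducible_words n" and h: "h \<in> irreducible_words n"
    and hs: "hs \<in> lists (irreducible_words n)"
    and g_eq: "g = h @ us" and us: "us @ r = concat hs"
  shows "us = []"
proof (rule ccontr)
  assume "us \<noteq> []"
  then obtain h' hs' where hs_eq: "hs = h' # hs'"
    using us by (cases hs) auto
  then have "h' \<noteq> []" "hd h'" using hs irreducible_wordsD(2,3) by auto
  then have "hd (us @ r) = hd h'" using us hs_eq by simp
  then have "hd us" using \<open>us \<noteq> []\<close> \<open>hd h'\<close> by simp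
  moreover have "int n dvd weight us"
    using irreducible_wordsD(4)[OF g] irreducible_wordsD(4)[OF h] unfolding g_eq
    by (simp add: dvd_add_right_iff)
  ultimately have "us \<in> norm_words n" by (simp add: norm_words_def)
  then show False
    using irreducible_words_not_append[OF g] g_eq \<open>us \<noteq> []\<close> irreducible_wordsD(1,2)[OF h]
    by blast
qed

lemma norm_words_factorization_unique:
  "gs \<in> lists (irreducible_words n) \<Longrightarrow> hs \<in> lists (irreducible_words n) \<Longrightarrow>
    concat gs = concat hs \<Longrightarrow> gs = hs"
proof (induction gs arbitrary: hs)
  case Nil
  then show ?case by (cases hs) (auto dest: irreducible_wordsD(2))
next
  case (Cons g gs)
  obtain h hs' where hs: "hs = h # hs'"
    using Cons.prems by (cases hs) (auto dest: irreducible_wordsD(2))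
  have g: "g \<in> irreducible_words n" and h: "h \<in> irreducible_words n"
    and gs: "gs \<in> lists (irreducible_words n)" and hs': "hs' \<in> lists (irreducible_words n)"
    using Cons.prems hs by auto
  have eq: "g @ concat gs = h @ concat hs'" using Cons.prems hs by simp
  then obtain us where
    "(g = h @ us \<and> us @ concat gs = concat hs') \<or> (g @ us = h \<and> concat gs = us @ concat hs')"
    unfolding append_eq_append_conv2 by (elim exE) (rule that)
  then have "g = h"
  proof (elim disjE conjE)
    assume "g = h @ us" "us @ concat gs = concat hs'"
    then show "g = h" using irreducible_prefix[OF g h hs'] by simp
  next
    assume "g @ us = h" "concat gs = us @ concat hs'"
    then show "g = h" using irreducible_prefix[OF h g gs, of us "concat hs'"] by simp
  qed
  moreover have "gs = hs'"
    using Cons.IH[OF gs hs'] eq \<open>g = h\<close> by simp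
  ultimately show ?case using hs by simp
qed

section \<open>Leading words\<close>

fun bin_val :: "bool list \<Rightarrow> nat" where
  "bin_val [] = 0"
| "bin_val (x # xs) = (if x then 2 ^ length xs else 0) + bin_val xs"

lemma bin_val_less: "bin_val xs < 2 ^ length xs"
  by (induction xs) auto

lemma bin_val_append: "bin_val (a @ b) = bin_val a * 2 ^ length b + bin_val b"
  by (induction a) (auto simp: power_add algebra_simps)

lemma bin_val_inj: "length a = length b \<Longrightarrow> bin_val a = bin_val b \<Longrightarrow> a = b"
proof (induction a arbitrary: b)
  case (Cons x a)
  then obtain y b' where b: "b = y # b'" by (cases b) auto
  have "x = y"
    using Cons.prems bin_val_less[of a] bin_val_less[of b'] b by (auto split: if_splits)
  then show ?case using Cons b by auto
qed simp

lemma bin_val_map_Not_less: "xs \<noteq> [] \<Longrightarrow> hd xs \<Longrightarrow> bin_val (map Not xs) < bin_val xs"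
  by (cases xs) (auto intro: less_le_trans[OF bin_val_less])

text \<open>The rank orders words by length and then lexicographically with v (True) above u (False).\<close>

definition word_rank :: "bool list \<Rightarrow> nat" where
  "word_rank w = 2 ^ length w + bin_val w"

lemma word_rank_less_if_shorter: "length a < length b \<Longrightarrow> word_rank a < word_rank b"
proof -
  assume "length a < length b"
  then have "2 ^ Suc (length a) \<le> (2::nat) ^ length b" by (intro power_increasing) auto
  then show "word_rank a < word_rank b" using bin_val_less[of a] by (auto simp: word_rank_def)
qed

lemma word_rank_inj: "word_rank a = word_rank b \<Longrightarrow> a = b"
proof -
  assume eq: "word_rank a = word_rank b"
  then have "length a = length b"
    using word_rank_less_if_shorter[of a b] word_rank_less_if_shorter[of b a] by linarith
  then show "a = b" using eq bin_val_inj by (auto simp: word_rank_def)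
qed

definition leading_word :: "ncpoly \<Rightarrow> bool list \<Rightarrow> bool" where
  "leading_word p w \<longleftrightarrow> p w \<noteq> 0 \<and> (\<forall>w'. p w' \<noteq> 0 \<longrightarrow> word_rank w' \<le> word_rank w)"

lemma leading_word_unique:
  assumes "leading_word p w" "leading_word p w'"
  shows "w = w'"
proof -
  have "word_rank w = word_rank w'"
    using assms by (auto simp: leading_word_def intro: antisym)
  then show ?thesis by (rule word_rank_inj)
qed

lemma leading_word_exists:
  assumes "p \<in> nc_elems" "p \<noteq> 0"
  shows "\<exists>w. leading_word p w"
proof -
  let ?R = "word_rank ` {w. p w \<noteq> 0}"
  have "finite ?R" "?R \<noteq> {}" using assms by (auto simp: nc_elems_def fun_eq_iff)
  then have "Max ?R \<in> ?R" by (rule Max_in)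
  then obtain w where "p w \<noteq> 0" "word_rank w = Max ?R" by auto
  then have "leading_word p w"
    using Max_ge[OF \<open>finite ?R\<close>] by (auto simp: leading_word_def)
  then show ?thesis ..
qed

lemma independent_by_leading_words:
  assumes lead: "\<And>v. v \<in> S \<Longrightarrow> \<exists>w. leading_word v w"
    and distinct: "\<And>v v' w. v \<in> S \<Longrightarrow> v' \<in> S \<Longrightarrow> leading_word v w \<Longrightarrow> leading_word v' w \<Longrightarrow> v = v'"
  shows "\<not> nc.dependent S"
proof
  assume "nc.dependent S"
  then obtain T u where T: "finite T" "T \<subseteq> S" and sum0: "(\<Sum>v\<in>T. nc_scale (u v) v) = 0"
    and "\<exists>v\<in>T. u v \<noteq> 0"
    unfolding nc.dependent_explicit by blast
  define T' where "T' = {v \<in> T. u v \<noteq> 0}"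
  define lw where "lw v = (SOME w. leading_word v w)" for v
  have lw: "leading_word v (lw v)" if "v \<in> T" for v
    unfolding lw_def using lead that T(2) by (blast intro: someI_ex)
  let ?r = "\<lambda>v. word_rank (lw v)"
  have "finite T'" "T' \<noteq> {}" using T \<open>\<exists>v\<in>T. u v \<noteq> 0\<close> by (auto simp: T'_def)
  then have "Max (?r ` T') \<in> ?r ` T'" by (intro Max_in) auto
  then obtain v0 where v0: "v0 \<in> T'" "?r v0 = Max (?r ` T')" by auto
  have v0_max: "?r v \<le> ?r v0" if "v \<in> T'" for v
  proof -
    have "?r v \<le> Max (?r ` T')" using \<open>finite T'\<close> that by (intro Max_ge) auto
    then show ?thesis using v0(2) by simp
  qed
  define w0 where "w0 = lw v0"
  have v0T: "v0 \<in> T" "u v0 \<noteq> 0" using v0(1) by (auto simp: T'_def)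
  have others: "u v * v w0 = 0" if "v \<in> T" "v \<noteq> v0" for v
  proof (rule ccontr)
    assume "u v * v w0 \<noteq> 0"
    then have "v \<in> T'" "v w0 \<noteq> 0" using that(1) by (auto simp: T'_def)
    then have "word_rank w0 \<le> ?r v" using lw[OF that(1)] by (auto simp: leading_word_def)
    moreover have "?r v \<le> word_rank w0" using v0_max[OF \<open>v \<in> T'\<close>] by (simp add: w0_def)
    ultimately have "lw v = w0" by (intro word_rank_inj antisym)
    then have "v = v0"
      using distinct[of v v0 w0] lw[OF that(1)] lw[OF v0T(1)] that(1) v0T(1) T(2)
      by (auto simp: w0_def)
    with that(2) show False ..
  qed
  have "0 = (\<Sum>v\<in>T. u v * v w0)"
    using fun_cong[OF sum0, of w0] by (simp add: sum_fun_apply nc_scale_def)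
  also have "\<dots> = u v0 * v0 w0 + (\<Sum>v\<in>T - {v0}. u v * v w0)"
    using T(1) v0T(1) by (rule sum.remove)
  also have "(\<Sum>v\<in>T - {v0}. u v * v w0) = 0"
    using others by (intro sum.neutral) auto
  finally show False
    using v0T lw[OF v0T(1)] by (simp add: leading_word_def w0_def)
qed

text \<open>Triangular elimination: subtracting from p a multiple of an element of S with the same
  leading word strictly lowers the largest rank in the support.\<close>

lemma span_by_leading_words_bounded:
  assumes F: "nc.subspace F" "F \<subseteq> nc_elems" "S \<subseteq> F"
    and lead: "\<And>p w. p \<in> F \<Longrightarrow> leading_word p w \<Longrightarrow> \<exists>v\<in>S. leading_word v w"
  shows "p \<in> F \<Longrightarrow> \<forall>w. p w \<noteq> 0 \<longrightarrow> word_rank w < N \<Longrightarrow> p \<in> nc.span S"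
proof (induction N arbitrary: p)
  case 0
  then have "p = 0" by (auto simp: fun_eq_iff)
  then show ?case by (metis nc.span_zero)
next
  case (Suc N)
  show ?case
  proof (cases "p = 0")
    case True
    then show ?thesis by (metis nc.span_zero)
  next
    case False
    then obtain w where w: "leading_word p w"
      using leading_word_exists Suc.prems(1) F(2) by blast
    then obtain v where v: "v \<in> S" "leading_word v w" using lead Suc.prems(1) by blast
    define q where "q = p - nc_scale (p w / v w) v"
    have vw: "v w \<noteq> 0" using v(2) by (simp add: leading_word_def)
    have "q \<in> F"
      unfolding q_def using Suc.prems(1) v(1) F(1,3) by (intro nc.subspace_diff nc.subspace_scale) auto
    moreover have "word_rank w' < N" if "q w' \<noteq> 0" for w'
    proof -
      have "p w' \<noteq> 0 \<or> v w' \<noteq> 0" using that by (auto simp: q_def nc_scale_def)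
      then have "word_rank w' \<le> word_rank w" using w v(2) by (auto simp: leading_word_def)
      moreover have "w' \<noteq> w" using that vw by (auto simp: q_def nc_scale_def)
      then have "word_rank w' \<noteq> word_rank w" using word_rank_inj by blast
      moreover have "word_rank w < Suc N" using w Suc.prems(2) by (simp add: leading_word_def)
      ultimately show ?thesis by linarith
    qed
    ultimately have "q \<in> nc.span S" using Suc.IH by blast
    moreover have "p = q + nc_scale (p w / v w) v" by (simp add: q_def)
    ultimately show ?thesis using v(1) by (metis nc.span_add nc.span_base nc.span_scale)
  qed
qed

lemma span_by_leading_words:
  assumes "nc.subspace F" "F \<subseteq> nc_elems" "S \<subseteq> F"
    and "\<And>p w. p \<in> F \<Longrightarrow> leading_word p w \<Longrightarrow> \<exists>v\<in>S. leading_word v w"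
  shows "F \<subseteq> nc.span S"
proof
  fix p assume "p \<in> F"
  then have "finite (word_rank ` {w. p w \<noteq> 0})" using assms(2) by (auto simp: nc_elems_def)
  then obtain N where "\<forall>w. p w \<noteq> 0 \<longrightarrow> word_rank w < N"
    by (meson finite_nat_set_iff_bounded imageI mem_Collect_eq)
  with \<open>p \<in> F\<close> show "p \<in> nc.span S"
    using span_by_leading_words_bounded[of F S p N] assms by blast
qed

section \<open>Orbit sums as free generators\<close>

definition orbit_sum :: "bool list \<Rightarrow> ncpoly" where
  "orbit_sum g = (\<lambda>w. if w = g \<or> w = map Not g then 1 else 0)"

fun blockwise_flip :: "bool list list \<Rightarrow> bool list \<Rightarrow> bool" where
  "blockwise_flip [] w \<longleftrightarrow> w = []"
| "blockwise_flip (g # gs) w \<longleftrightarrow> length g \<le> length w \<and>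
     (take (length g) w = g \<or> take (length g) w = map Not g) \<and> blockwise_flip gs (drop (length g) w)"

lemma nc_prod_orbit_sums: "nc_prod (map orbit_sum gs) = (\<lambda>w. if blockwise_flip gs w then 1 else 0)"
proof (induction gs)
  case Nil
  then show ?case by (auto simp: nc_one_def)
next
  case (Cons g gs)
  have "\<forall>w. orbit_sum g w \<noteq> 0 \<longrightarrow> length w = length g" by (auto simp: orbit_sum_def)
  note mult = nc_mult_apply_homog_left[OF this]
  have prod: "nc_prod (map orbit_sum (g # gs)) w = (if length g \<le> length w then
      orbit_sum g (take (length g) w) * (if blockwise_flip gs (drop (length g) w) then 1 else 0) else 0)"
    for w by (simp add: mult Cons.IH)
  show ?case unfolding fun_eq_iff prod by (auto simp: orbit_sum_def)
qed

lemma blockwise_flip_length: "blockwise_flip gs w \<Longrightarrow> length w = length (concat gs)"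
proof (induction gs arbitrary: w)
  case (Cons g gs)
  have "length (drop (length g) w) = length (concat gs)"
    using Cons.IH[of "drop (length g) w"] Cons.prems by simp
  moreover have "length g \<le> length w" using Cons.prems by simp
  ultimately show ?case by simp
qed simp

lemma blockwise_flip_concat: "blockwise_flip gs (concat gs)"
  by (induction gs) auto

lemma blockwise_flip_map_Not: "blockwise_flip gs w \<Longrightarrow> blockwise_flip gs (map Not w)"
proof (induction gs arbitrary: w)
  case (Cons g gs)
  have "map Not (take (length g) w) = map Not g \<or> map Not (take (length g) w) = g"
    using Cons.prems by (auto simp: comp_def)
  then show ?case using Cons by (auto simp: take_map drop_map)
qed simp

lemma blockwise_flip_weight:
  "blockwise_flip gs w \<Longrightarrow> (\<And>g. g \<in> set gs \<Longrightarrow> int n dvd weight g) \<Longrightarrow> int n dvd weight w"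
proof (induction gs arbitrary: w)
  case (Cons g gs)
  have "int n dvd weight (take (length g) w)"
    using Cons.prems by auto
  moreover have "int n dvd weight (drop (length g) w)"
    using Cons by simp
  ultimately show ?case
    by (metis append_take_drop_id dvd_add weight_simps(4))
qed simp

lemma blockwise_flip_bin_val:
  "blockwise_flip gs w \<Longrightarrow> (\<And>g. g \<in> set gs \<Longrightarrow> g \<noteq> [] \<and> hd g) \<Longrightarrow> bin_val w \<le> bin_val (concat gs)"
proof (induction gs arbitrary: w)
  case (Cons g gs)
  let ?m = "length g" and ?l = "length (concat gs)"
  have "bin_val (take ?m w) \<le> bin_val g"
    using Cons.prems bin_val_map_Not_less[of g] by auto
  moreover have "bin_val (drop ?m w) \<le> bin_val (concat gs)"
    using Cons by simp
  moreover have "length (drop ?m w) = ?l"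
    using Cons.prems blockwise_flip_length[of gs "drop ?m w"] by simp
  ultimately have "bin_val (take ?m w) * 2 ^ ?l + bin_val (drop ?m w) \<le> bin_val g * 2 ^ ?l + bin_val (concat gs)"
    by (intro add_mono mult_right_mono) auto
  then show ?case
    using bin_val_append[of "take ?m w" "drop ?m w"] \<open>length (drop ?m w) = ?l\<close>
    by (simp add: bin_val_append)
qed simp

lemma leading_word_orbit_product:
  assumes "\<And>g. g \<in> set gs \<Longrightarrow> g \<noteq> [] \<and> hd g"
  shows "leading_word (nc_prod (map orbit_sum gs)) (concat gs)"
proof -
  have "word_rank w \<le> word_rank (concat gs)" if "blockwise_flip gs w" for w
    using blockwise_flip_length[OF that] blockwise_flip_bin_val[OF that assms]
    by (simp add: word_rank_def)
  then show ?thesis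
    by (simp add: leading_word_def nc_prod_orbit_sums blockwise_flip_concat)
qed

lemma leading_word_dih_invariant:
  assumes "n > 0" "p \<in> dih_invariants n" "leading_word p w"
  shows "w \<in> norm_words n"
proof -
  have sym: "p (map Not w) = p w" and dvd: "int n dvd weight w"
    using assms by (auto simp: dih_invariants_iff leading_word_def)
  have "w = [] \<or> hd w"
  proof (rule ccontr)
    assume "\<not> (w = [] \<or> hd w)"
    then have "bin_val w < bin_val (map Not w)"
      using bin_val_map_Not_less[of "map Not w"] by (simp add: hd_map comp_def)
    then have "word_rank w < word_rank (map Not w)" by (simp add: word_rank_def)
    moreover have "p (map Not w) \<noteq> 0" using sym assms(3) by (simp add: leading_word_def)
    ultimately show False using assms(3) by (auto simp: leading_word_def)
  qed
  then show ?thesis using dvd by (simp add: norm_words_def)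
qed

lemma leading_word_orbit_product_irreducible:
  "gs \<in> lists (irreducible_words n) \<Longrightarrow> leading_word (nc_prod (map orbit_sum gs)) (concat gs)"
  by (intro leading_word_orbit_product) (auto dest: irreducible_wordsD(2,3))

lemma orbit_products_inj:
  assumes "gs \<in> lists (irreducible_words n)" "hs \<in> lists (irreducible_words n)"
    and "nc_prod (map orbit_sum gs) = nc_prod (map orbit_sum hs)"
  shows "gs = hs"
proof -
  have "concat gs = concat hs"
    using leading_word_orbit_product_irreducible[OF assms(1)]
      leading_word_orbit_product_irreducible[OF assms(2)] assms(3)
    by (metis leading_word_unique)
  then show ?thesis using norm_words_factorization_unique assms(1,2) by blast
qed

lemma orbit_product_in_dih_invariants:
  assumes "n > 0" "gs \<in> lists (irreducible_words n)"
  shows "nc_prod (map orbit_sum gs) \<in> dih_invariants n"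
  unfolding nc_prod_orbit_sums
proof (rule indicator_in_dih_invariants[OF assms(1)])
  show "finite {w. blockwise_flip gs w}"
    by (rule rev_finite_subset[OF finite_words_length_eq[of "length (concat gs)"]])
      (auto dest: blockwise_flip_length)
  show "int n dvd weight w" if "blockwise_flip gs w" for w
    using blockwise_flip_weight[OF that] assms(2) irreducible_wordsD(4) by auto
  show "blockwise_flip gs (map Not w) = blockwise_flip gs w" for w
    using blockwise_flip_map_Not[of gs w] blockwise_flip_map_Not[of gs "map Not w"]
    by (auto simp: comp_def)
qed

definition orbit_generators :: "nat \<Rightarrow> ncpoly set" where
  "orbit_generators n = orbit_sum ` irreducible_words n"

lemma nc_prod_lists_orbit_generators:
  "nc_prod ` lists (orbit_generators n) =
    (\<lambda>gs. nc_prod (map orbit_sum gs)) ` lists (irreducible_words n)"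
  by (simp add: orbit_generators_def lists_image image_image)

lemma nc_homog_orbit_sum: "nc_homog (length g) (orbit_sum g)"
proof -
  have "{w. orbit_sum g w \<noteq> 0} = {g, map Not g}" by (auto simp: orbit_sum_def)
  then show ?thesis by (auto simp: nc_homog_def nc_elems_def orbit_sum_def)
qed

lemma homog_degree_orbit_sum: "homog_degree (orbit_sum g) = length g"
proof (rule homog_degree_eq[OF nc_homog_orbit_sum])
  show "orbit_sum g \<noteq> 0" by (auto simp: orbit_sum_def fun_eq_iff)
qed

lemma independent_orbit_products:
  "\<not> nc.dependent ((\<lambda>gs. nc_prod (map orbit_sum gs)) ` lists (irreducible_words n))"
proof (rule independent_by_leading_words)
  fix v assume "v \<in> (\<lambda>gs. nc_prod (map orbit_sum gs)) ` lists (irreducible_words n)"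
  then show "\<exists>w. leading_word v w" using leading_word_orbit_product_irreducible by blast
next
  fix v v' w
  assume "v \<in> (\<lambda>gs. nc_prod (map orbit_sum gs)) ` lists (irreducible_words n)"
    "v' \<in> (\<lambda>gs. nc_prod (map orbit_sum gs)) ` lists (irreducible_words n)"
    and lead: "leading_word v w" "leading_word v' w"
  then obtain gs hs where gs: "gs \<in> lists (irreducible_words n)" "v = nc_prod (map orbit_sum gs)"
    and hs: "hs \<in> lists (irreducible_words n)" "v' = nc_prod (map orbit_sum hs)"
    by blast
  have "concat gs = w" "concat hs = w"
    using leading_word_orbit_product_irreducible[OF gs(1)] leading_word_orbit_product_irreducible[OF hs(1)]
      lead gs(2) hs(2) leading_word_unique by blast+
  then have "gs = hs" using norm_words_factorization_unique gs(1) hs(1) by simp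
  then show "v = v'" using gs(2) hs(2) by simp
qed

lemma span_orbit_products:
  assumes "n > 0"
  shows "nc.span ((\<lambda>gs. nc_prod (map orbit_sum gs)) ` lists (irreducible_words n)) = dih_invariants n"
    (is "nc.span ?P = _")
proof
  have P_sub: "?P \<subseteq> dih_invariants n"
    using orbit_product_in_dih_invariants[OF assms] by blast
  then show "nc.span ?P \<subseteq> dih_invariants n"
    by (rule nc.span_minimal[OF _ dih_invariants_subspace])
  show "dih_invariants n \<subseteq> nc.span ?P"
  proof (rule span_by_leading_words[OF dih_invariants_subspace _ P_sub])
    show "dih_invariants n \<subseteq> nc_elems" by (auto simp: dih_invariants_def)
    fix p w assume "p \<in> dih_invariants n" "leading_word p w"
    then obtain gs where "gs \<in> lists (irreducible_words n)" "concat gs = w"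
      using leading_word_dih_invariant[OF assms] norm_words_factorization by blast
    then show "\<exists>v\<in>?P. leading_word v w"
      using leading_word_orbit_product_irreducible by blast
  qed
qed

theorem orbit_generators_free:
  assumes "n > 0"
  shows "free_homog_generators (orbit_generators n) (dih_invariants n)"
  unfolding free_homog_generators_def nc_prod_lists_orbit_generators
proof (intro conjI)
  show "orbit_generators n \<subseteq> dih_invariants n"
    using orbit_product_in_dih_invariants[OF assms, of "[_]"] by (auto simp: orbit_generators_def)
  show "\<forall>y\<in>orbit_generators n. \<exists>d. nc_homog d y"
    using nc_homog_orbit_sum by (auto simp: orbit_generators_def)
  show "inj_on nc_prod (lists (orbit_generators n))"
    unfolding orbit_generators_def lists_image
    by (auto simp: inj_on_def) (metis in_listsI orbit_products_inj)
qed (simp_all add: independent_orbit_products span_orbit_products[OF assms])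

lemma graded_dim_dih_invariants:
  assumes "n > 0"
  shows "graded_dim (dih_invariants n) k = card {w \<in> norm_words n. length w = k}"
proof -
  let ?G = "{gs \<in> lists (irreducible_words n). length (concat gs) = k}"
  have "(\<Sum>y\<leftarrow>map orbit_sum gs. homog_degree y) = length (concat gs)" for gs
    by (induction gs) (simp_all add: homog_degree_orbit_sum)
  then have "weighted_lists homog_degree (orbit_generators n) k = map orbit_sum ` ?G"
    by (auto simp: weighted_lists_def orbit_generators_def lists_image)
  moreover have "inj_on (map orbit_sum) ?G"
    by (auto simp: inj_on_def intro: orbit_products_inj)
  moreover have "{w \<in> norm_words n. length w = k} = concat ` ?G"
    using norm_words_factorization concat_in_norm_words by fastforce
  moreover have "inj_on concat ?G"
    by (auto simp: inj_on_def intro: norm_words_factorization_unique)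
  ultimately show ?thesis
    using free_homog_generators_graded_dim[OF orbit_generators_free[OF assms]]
    by (simp add: card_image)
qed

section \<open>The case n = 3\<close>

lemma card_words_Suc:
  "card {w :: bool list. length w = Suc m \<and> P w} =
     card {w. length w = m \<and> P (False # w)} + card {w. length w = m \<and> P (True # w)}"
proof -
  have fin: "finite {w :: bool list. length w = m \<and> Q w}" for Q
    by (rule rev_finite_subset[OF finite_words_length_eq[of m]]) auto
  have "{w :: bool list. length w = Suc m \<and> P w} =
      Cons False ` {w. length w = m \<and> P (False # w)} \<union> Cons True ` {w. length w = m \<and> P (True # w)}"
  proof (rule set_eqI)
    fix w :: "bool list"
    show "w \<in> {w. length w = Suc m \<and> P w} \<longleftrightarrow>
      w \<in> Cons False ` {w. length w = m \<and> P (False # w)} \<union> Cons True ` {w. length w = m \<and> P (True # w)}"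
    proof (cases w)
      case (Cons x xs)
      then show ?thesis by (cases x) auto
    qed auto
  qed
  also have "card \<dots> = card {w. length w = m \<and> P (False # w)} + card {w. length w = m \<and> P (True # w)}"
    by (subst card_Un_disjoint) (auto simp: fin card_image)
  finally show ?thesis .
qed

definition weight_count :: "nat \<Rightarrow> int \<Rightarrow> nat" where
  "weight_count m r = card {w. length w = m \<and> weight w mod 3 = r}"

lemma weight_count_Suc:
  "weight_count (Suc m) 0 = weight_count m 2 + weight_count m 1"
  "weight_count (Suc m) 1 = weight_count m 0 + weight_count m 2"
  "weight_count (Suc m) 2 = weight_count m 1 + weight_count m 0"
proof -
  have "((x + 1) mod 3 = 0) = (x mod 3 = 2)" "((x - 1) mod 3 = 0) = (x mod 3 = 1)"
    "((x + 1) mod 3 = 1) = (x mod 3 = 0)" "((x - 1) mod 3 = 1) = (x mod 3 = 2)"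
    "((x + 1) mod 3 = 2) = (x mod 3 = 1)" "((x - 1) mod 3 = 2) = (x mod 3 = 0)" for x :: int
    by presburger+
  then show "weight_count (Suc m) 0 = weight_count m 2 + weight_count m 1"
    "weight_count (Suc m) 1 = weight_count m 0 + weight_count m 2"
    "weight_count (Suc m) 2 = weight_count m 1 + weight_count m 0"
    unfolding weight_count_def card_words_Suc by simp_all
qed

lemma weight_count_0: "weight_count 0 0 = 1" "weight_count 0 1 = 0" "weight_count 0 2 = 0"
proof -
  have "{w :: bool list. length w = 0 \<and> weight w mod 3 = r} = (if r = 0 then {[]} else {})" for r
    by auto
  then show "weight_count 0 0 = 1" "weight_count 0 1 = 0" "weight_count 0 2 = 0"
    by (simp_all add: weight_count_def)
qed

text \<open>By the symmetry between u and v the residues 1 and 2 are equally frequent, so that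
  weight_count (m + 1) 1 + weight_count m 1 = 2 ^ m.\<close>

lemma weight_count_rec: "weight_count (Suc (Suc m)) 1 = weight_count (Suc m) 1 + 2 * weight_count m 1"
proof -
  have inv: "weight_count m 1 = weight_count m 2 \<and>
      weight_count m 0 + weight_count m 1 + weight_count m 2 = 2 ^ m" for m
    by (induction m) (auto simp: weight_count_0 weight_count_Suc)
  have "weight_count (Suc m) 1 + weight_count m 1 = 2 ^ m" for m
    using inv[of m] by (simp add: weight_count_Suc)
  from this[of m] this[of "Suc m"] show ?thesis by simp
qed

lemma card_norm_words_3:
  "card {w \<in> norm_words 3. length w = k} = (if k = 0 then 1 else weight_count (k - 1) 1)"
proof (cases k)
  case 0
  then have "{w \<in> norm_words 3. length w = k} = {[]}" by auto
  then show ?thesis using 0 by simp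
next
  case (Suc m)
  have dvd: "(3 dvd (x - 1)) = (x mod 3 = 1)" for x :: int by presburger
  have "{w \<in> norm_words 3. length w = Suc m} = Cons True ` {w. length w = m \<and> weight w mod 3 = 1}"
  proof (rule set_eqI)
    fix w :: "bool list"
    show "w \<in> {w \<in> norm_words 3. length w = Suc m} \<longleftrightarrow> w \<in> Cons True ` {w. length w = m \<and> weight w mod 3 = 1}"
    proof (cases w)
      case (Cons x xs)
      then show ?thesis by (cases x) (auto simp: norm_words_def dvd)
    qed auto
  qed
  then show ?thesis using Suc by (simp add: card_image weight_count_def)
qed

lemma fps_mult_quadratic_nth:
  fixes f :: "'a::comm_ring_1 fps"
  shows "(f * (1 - fps_X - fps_const c * fps_X ^ 2)) $ k =
    f $ k - (if k = 0 then 0 else f $ (k - 1)) - c * (if k < 2 then 0 else f $ (k - 2))"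
proof -
  have "f * (1 - fps_X - fps_const c * fps_X ^ 2) = f - fps_X * f - fps_const c * (fps_X ^ 2 * f)"
    by (simp add: algebra_simps)
  then show ?thesis by (simp add: fps_X_power_mult_nth)
qed

lemma hilbert_series_dih_invariants_3_mult:
  "hilbert_series (dih_invariants 3) * (1 - fps_X - 2 * fps_X ^ 2) = 1 - fps_X - fps_X ^ 2"
proof -
  define c where "c m = (of_nat (weight_count m 1) :: complex)" for m
  have h: "hilbert_series (dih_invariants 3) $ k = (if k = 0 then 1 else c (k - 1))" for k
    by (simp add: hilbert_series_def graded_dim_dih_invariants card_norm_words_3 c_def)
  have c: "c 0 = 0" "c (Suc 0) = 1" "c (Suc (Suc m)) = c (Suc m) + 2 * c m" for m
    using weight_count_Suc(2)[of 0] by (simp_all add: c_def weight_count_0 weight_count_rec)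
  have "hilbert_series (dih_invariants 3) * (1 - fps_X - fps_const 2 * fps_X ^ 2) =
      1 - fps_X - fps_const 1 * fps_X ^ 2"
  proof (rule fps_ext)
    fix k
    consider "k = 0" | "k = 1" | "k = 2" | m where "k = Suc (Suc (Suc m))"
      by (metis One_nat_def Suc_1 not0_implies_Suc)
    then show "(hilbert_series (dih_invariants 3) * (1 - fps_X - fps_const 2 * fps_X ^ 2)) $ k =
        (1 - fps_X - fps_const 1 * fps_X ^ 2) $ k"
      by cases (simp_all add: fps_mult_quadratic_nth h c)
  qed
  then show ?thesis by (simp add: numeral_fps_const)
qed

definition fib_series :: "complex fps" where
  "fib_series = Abs_fps (\<lambda>d. of_nat (fib (d - 1)))"

lemma fib_series_mult: "fib_series * (1 - fps_X - fps_X ^ 2) = fps_X ^ 2"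
proof (rule fps_ext)
  fix k
  consider "k = 0" | "k = 1" | "k = 2" | m where "k = Suc (Suc (Suc m))"
    by (metis One_nat_def Suc_1 not0_implies_Suc)
  then show "(fib_series * (1 - fps_X - fps_X ^ 2)) $ k = fps_X ^ 2 $ k"
    by cases (simp_all add: fps_mult_quadratic_nth[where c = 1, simplified] fib_series_def)
qed

lemma inv_hilbert_series_3:
  "inv_hilbert_series 3 = (1 - fps_X - fps_X ^ 2) / (1 - fps_X - 2 * fps_X ^ 2)"
proof -
  let ?H = "hilbert_series (dih_invariants 3)" and ?D = "1 - fps_X - 2 * fps_X ^ 2 :: complex fps"
  have D0: "?D $ 0 \<noteq> 0" by simp
  have "(1 - fps_X - fps_X ^ 2) / ?D = ?H * ?D * inverse ?D"
    using hilbert_series_dih_invariants_3_mult fps_divide_unit[OF D0] by simp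
  also have "\<dots> = ?H"
    using inverse_mult_eq_1'[OF D0] by (simp add: mult.assoc)
  also have "?H = inv_hilbert_series 3"
    by (simp add: inv_hilbert_series_def hilbert_series_def inv_hdim_def graded_dim_def)
  finally show ?thesis ..
qed

lemma degree_series_dih_invariants_3:
  assumes "free_homog_generators Y (dih_invariants 3)"
  shows "degree_series Y = fib_series"
proof -
  let ?N = "1 - fps_X - fps_X ^ 2 :: complex fps"
  have "degree_series Y * ?N = fps_X ^ 2"
    using degree_series_free[OF assms hilbert_series_dih_invariants_3_mult] by simp
  also have "\<dots> = fib_series * ?N" by (rule fib_series_mult[symmetric])
  moreover have "?N \<noteq> 0"
  proof
    assume "?N = 0"
    then have "?N $ 0 = 0" by simp
    then show False by simp
  qed
  ultimately show ?thesis by (metis mult_right_cancel)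
qed

theorem mainTheorem2:
  shows "inv_hilbert_series 3 =
           (1 - fps_X - fps_X ^ 2) / (1 - fps_X - 2 * fps_X ^ 2)
       \<and> (\<exists>Y. free_homog_generators Y (dih_invariants 3))
       \<and> (\<forall>Y. free_homog_generators Y (dih_invariants 3) \<longrightarrow>
              {y \<in> Y. nc_homog 1 y} = {} \<and>
              (\<forall>d\<ge>2. finite {y \<in> Y. nc_homog d y} \<and>
                      card {y \<in> Y. nc_homog d y} = fib (d - 1)))"
proof -
  have generators: "finite {y \<in> Y. nc_homog d y} \<and> card {y \<in> Y. nc_homog d y} = fib (d - 1)"
    if "free_homog_generators Y (dih_invariants 3)" for Y d
  proof
    show "finite {y \<in> Y. nc_homog d y}"
      using finite_free_generators_of_degree[OF that] free_generators_of_degree[OF that] by simp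
    have "degree_series Y $ d = fib_series $ d"
      using degree_series_dih_invariants_3[OF that] by simp
    then show "card {y \<in> Y. nc_homog d y} = fib (d - 1)"
      by (simp add: degree_series_def fib_series_def)
  qed
  have "{y \<in> Y. nc_homog 1 y} = {}" if "free_homog_generators Y (dih_invariants 3)" for Y
    using generators[OF that, of 1] by (metis card_0_eq diff_self_eq_0 fib0)
  then show ?thesis
    using inv_hilbert_series_3 orbit_generators_free[of 3] generators by auto
qed

end
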